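(* Let $\mu>0$, $\beta\ge0$, $f\in C^\infty([0,1])$ with $f>0$ on $(0,1)$, and $F(x_1):=\int_{x_1}^1f(s)\,ds$. Consider $$\mathcal E(\alpha):=\frac{\mu}{4\pi}\int_0^1|\alpha'|^2\,dx_1+\beta\int_0^1F\sin\alpha\,dx_1$$ on $\{\alpha\in H^1(0,1):\alpha(0)=0\}$. Then $\mathcal E$ has a unique minimizer $\alpha_*$; it satisfies $\alpha_*\in C^2([0,1])$, $\alpha_*(x_1)\in[-\frac\pi2,0]$ for all $x_1$, and it is a classical solution of $$-\tfrac{\mu}{2\pi}\alpha''+\beta F\cos\alpha=0\ \text{ on }(0,1),\qquad\alpha(0)=0,\ \alpha'(1)=0.$$ *)

theory Defs
  imports "HOL-Analysis.Analysis"
begin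

definition smooth_on_cl01 :: "(real \<Rightarrow> real) \<Rightarrow> bool" where
  "smooth_on_cl01 f \<longleftrightarrow> (\<exists>D :: nat \<Rightarrow> real \<Rightarrow> real.
      (\<forall>x\<in>{0..1}. D 0 x = f x) \<and>
      (\<forall>k. continuous_on {0..1} (D k)) \<and>
      (\<forall>k. \<forall>x\<in>{0..1}. (D k has_real_derivative D (Suc k) x) (at x within {0..1})))"

text \<open>alpha belongs to H^1(0,1) with (weak) derivative g: g is in L^2(0,1) and
  alpha is (the continuous representative) alpha(x) = alpha(0) + int_0^x g on [0,1].\<close>
definition H1_with_deriv :: "(real \<Rightarrow> real) \<Rightarrow> (real \<Rightarrow> real) \<Rightarrow> bool" where
  "H1_with_deriv \<alpha> g \<longleftrightarrow>
     g \<in> borel_measurable lborel \<and>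
     set_integrable lborel {0..1} g \<and>
     set_integrable lborel {0..1} (\<lambda>x. (g x)\<^sup>2) \<and>
     (\<forall>x\<in>{0..1}. \<alpha> x = \<alpha> 0 + (LBINT s=0..x. g s))"

definition Fprim :: "(real \<Rightarrow> real) \<Rightarrow> real \<Rightarrow> real" where
  "Fprim f x = (LBINT s=x..1. f s)"

definition energy :: "real \<Rightarrow> real \<Rightarrow> (real \<Rightarrow> real) \<Rightarrow> (real \<Rightarrow> real) \<Rightarrow> (real \<Rightarrow> real) \<Rightarrow> real" where
  "energy \<mu> \<beta> f \<alpha> g =
     \<mu> / (4 * pi) * (LBINT x=0..1. (g x)\<^sup>2) + \<beta> * (LBINT x=0..1. Fprim f x * sin (\<alpha> x))"

definition is_minimizer :: "real \<Rightarrow> real \<Rightarrow> (real \<Rightarrow> real) \<Rightarrow> (real \<Rightarrow> real) \<Rightarrow> bool" where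
  "is_minimizer \<mu> \<beta> f \<alpha> \<longleftrightarrow> \<alpha> 0 = 0 \<and>
     (\<exists>g. H1_with_deriv \<alpha> g \<and>
        (\<forall>\<gamma> h. \<gamma> 0 = 0 \<and> H1_with_deriv \<gamma> h \<longrightarrow> energy \<mu> \<beta> f \<alpha> g \<le> energy \<mu> \<beta> f \<gamma> h))"

definition C2_cl01 :: "(real \<Rightarrow> real) \<Rightarrow> (real \<Rightarrow> real) \<Rightarrow> (real \<Rightarrow> real) \<Rightarrow> bool" where
  "C2_cl01 \<alpha> a1 a2 \<longleftrightarrow>
     (\<forall>x\<in>{0..1}. (\<alpha> has_real_derivative a1 x) (at x within {0..1})) \<and>
     (\<forall>x\<in>{0..1}. (a1 has_real_derivative a2 x) (at x within {0..1})) \<and>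
     continuous_on {0..1} a2"

end

theory Submission
  imports Defs
begin

text \<open>The Euler--Lagrange equation \<open>\<alpha>'' = k F cos \<alpha>\<close>, \<open>k = 2\<pi>\<beta>/\<mu>\<close>, with \<open>\<alpha>(0) = 0\<close>,
  \<open>\<alpha>'(1) = 0\<close>, is solved by shooting from \<open>x = 1\<close>: prescribing \<open>\<alpha>(1) = a\<close> gives a Volterra integral
  equation (a contraction in a weighted sup norm), the value at \<open>0\<close> depends continuously on \<open>a\<close>, equals
  \<open>-\<pi>/2\<close> for \<open>a = -\<pi>/2\<close> and is at least \<open>a\<close>, so the intermediate value theorem gives a solution
  \<open>u\<close> with values in \<open>(-\<pi>/2, 0]\<close> and \<open>u'' \<ge> 0\<close>.

  For a competitor \<open>\<gamma>\<close> with \<open>\<gamma>(0) = 0\<close> put \<open>\<phi> = min |\<gamma>| (\<pi>/2)\<close>. Since \<open>sin \<gamma> \<ge> sin (-\<phi>)\<close> and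
  the sine lies above its tangents on \<open>[-\<pi>/2, 0]\<close>,
  \<open>\<beta> \<integral> F (sin \<gamma> - sin u) \<ge> -\<beta> \<integral> F cos u (\<phi> + u) = -(\<mu>/2\<pi>) \<integral> u''(\<phi> + u)\<close>.
  Integrating by parts, \<open>-\<integral> u'' u = \<integral> u'^2\<close>, and by Tonelli with \<open>\<phi>(s) \<le> \<integral>\<^sub>0\<^sup>s |\<gamma>'|\<close>,
  \<open>\<integral> u'' \<phi> \<le> \<integral> |\<gamma>'| (-u') \<le> (\<integral> \<gamma>'^2 + \<integral> u'^2)/2\<close>; together these give
  \<open>E(\<gamma>) \<ge> E(u)\<close>. Equality forces the tangent gap to vanish where \<open>F > 0\<close>, i.e. on \<open>[0, 1)\<close>,
  hence \<open>\<gamma> = u\<close>.\<close>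

lemma LBINT_0_eq_set_integral: "0 \<le> x \<Longrightarrow> (LBINT s=0..x. f s) = (LINT s:{0..x}|lborel. f s)"
  using interval_integral_Icc[of 0 x f] by (simp add: zero_ereal_def)

lemma LBINT_1_eq_set_integral: "x \<le> 1 \<Longrightarrow> (LBINT s=x..1. f s) = (LINT s:{x..1}|lborel. f s)"
  using interval_integral_Icc[of x 1 f] by (simp add: one_ereal_def)

lemma LBINT_01_eq_set_integral: "(LBINT s=0..1. f s) = (LINT s:{0..1}|lborel. f s)"
  using interval_integral_Icc[of 0 1 f] by (simp add: zero_ereal_def one_ereal_def)

lemma clamp_01_in: "clamp 0 1 (x::real) \<in> {0..1}"
  using clamp_in_interval[of 0 1 x] by simp

lemma continuous_on_compose_clamp_01:
  fixes g :: "real \<Rightarrow> 'a::metric_space"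
  shows "continuous_on {0..1} g \<Longrightarrow> continuous_on UNIV (\<lambda>x. g (clamp 0 1 x))"
  using clamp_continuous_at[of 0 1 g] by (simp add: continuous_at_imp_continuous_on)

lemma set_integrable_continuous_mult:
  fixes g h :: "real \<Rightarrow> real"
  assumes g: "continuous_on {0..1} g" and [measurable]: "h \<in> borel_measurable lborel"
    and h: "set_integrable lborel {0..1} h"
  shows "set_integrable lborel {0..1} (\<lambda>t. g t * h t)"
proof -
  obtain B where B: "\<And>t. t \<in> {0..1} \<Longrightarrow> norm (g t) \<le> B"
    using continuous_on_compact_bound[OF compact_Icc g] by blast
  have [measurable]: "(\<lambda>t. g (clamp 0 1 t)) \<in> borel_measurable lborel"
    using borel_measurable_continuous_onI[OF continuous_on_compose_clamp_01[OF g]] by simp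
  have "set_borel_measurable lborel {0..1} (\<lambda>t. g (clamp 0 1 t) * h t)"
    unfolding set_borel_measurable_def by measurable
  then have meas: "set_borel_measurable lborel {0..1} (\<lambda>t. g t * h t)"
    unfolding set_borel_measurable_def
    by (rule measurable_cong[THEN iffD1, rotated]) (auto simp: indicator_def)
  have int: "set_integrable lborel {0..1} (\<lambda>t. B * h t)"
    using h by simp
  have bound: "AE t in lborel. t \<in> {0..1} \<longrightarrow> norm (g t * h t) \<le> norm (B * h t)"
  proof (rule AE_I2, intro impI)
    fix t :: real assume "t \<in> {0..1}"
    then have "\<bar>g t\<bar> \<le> \<bar>B\<bar>" using B[of t] by simp
    then show "norm (g t * h t) \<le> norm (B * h t)" by (simp add: abs_mult mult_right_mono)
  qed
  show ?thesis by (rule set_integrable_bound[OF int meas bound])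
qed

lemma set_integral_nonneg_real:
  fixes f :: "'a \<Rightarrow> real"
  shows "(\<And>x. x \<in> A \<Longrightarrow> 0 \<le> f x) \<Longrightarrow> 0 \<le> (LINT x:A|M. f x)"
  unfolding set_lebesgue_integral_def
  by (rule Bochner_Integration.integral_nonneg) (simp add: indicator_def)

lemma set_nn_integral_eq_set_integral_real:
  fixes f :: "real \<Rightarrow> real"
  assumes "set_integrable lborel A f" "\<And>x. x \<in> A \<Longrightarrow> 0 \<le> f x"
  shows "(\<integral>\<^sup>+x\<in>A. ennreal (f x) \<partial>lborel) = ennreal (LINT x:A|lborel. f x)"
  unfolding set_lebesgue_integral_def nn_integral_set_ennreal
  using assms
  by (subst nn_integral_eq_integral[symmetric])
    (auto simp: set_integrable_def mult.commute intro!: nn_integral_cong split: split_indicator)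

lemma nn_integral_triangle_swap:
  fixes q k :: "real \<Rightarrow> ennreal"
  assumes [measurable]: "q \<in> borel_measurable borel" "k \<in> borel_measurable borel"
  shows "(\<integral>\<^sup>+s\<in>{a..b}. q s * (\<integral>\<^sup>+t\<in>{a..s}. k t \<partial>lborel) \<partial>lborel)
       = (\<integral>\<^sup>+t\<in>{a..b}. k t * (\<integral>\<^sup>+s\<in>{t..b}. q s \<partial>lborel) \<partial>lborel)"
proof -
  define g :: "real \<times> real \<Rightarrow> ennreal" where
    "g p = (if a \<le> snd p \<and> snd p \<le> fst p \<and> fst p \<le> b then q (fst p) * k (snd p) else 0)" for p
  have "case_prod (\<lambda>s t. g (s, t)) \<in> borel_measurable (lborel \<Otimes>\<^sub>M lborel)"
    unfolding g_def by (simp add: measurable_cong_sets[OF sets_pair_measure_cong[OF sets_lborel sets_lborel] refl])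
  then have "(\<integral>\<^sup>+s. (\<integral>\<^sup>+t. g (s, t) \<partial>lborel) \<partial>lborel) = (\<integral>\<^sup>+t. (\<integral>\<^sup>+s. g (s, t) \<partial>lborel) \<partial>lborel)"
    by (rule lborel_pair.Fubini'[symmetric])
  moreover have "(\<integral>\<^sup>+t. g (s, t) \<partial>lborel) = q s * (\<integral>\<^sup>+t\<in>{a..s}. k t \<partial>lborel) * indicator {a..b} s" for s
  proof (cases "s \<in> {a..b}")
    case True
    then show ?thesis
      by (subst nn_integral_cmult[symmetric]) (auto simp: g_def intro!: nn_integral_cong
          split: split_indicator)
  next
    case False
    then have "g (s, t) = 0" for t by (auto simp: g_def)
    with False show ?thesis by simp
  qed
  moreover have "(\<integral>\<^sup>+s. g (s, t) \<partial>lborel) = k t * (\<integral>\<^sup>+s\<in>{t..b}. q s \<partial>lborel) * indicator {a..b} t" for t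
  proof (cases "t \<in> {a..b}")
    case True
    then show ?thesis
      by (subst nn_integral_cmult[symmetric]) (auto simp: g_def mult_ac intro!: nn_integral_cong
          split: split_indicator)
  next
    case False
    then have "g (s, t) = 0" for s by (auto simp: g_def)
    with False show ?thesis by simp
  qed
  ultimately show ?thesis by simp
qed

lemma set_nn_integral_eq_integral_continuous:
  fixes q :: "real \<Rightarrow> real"
  assumes "continuous_on {a..b} q" "\<And>s. s \<in> {a..b} \<Longrightarrow> 0 \<le> q s"
  shows "(\<integral>\<^sup>+s\<in>{a..b}. ennreal (q s) \<partial>lborel) = ennreal (integral {a..b} q)"
proof -
  have q: "set_integrable lborel {a..b} q"
    by (rule borel_integrable_atLeastAtMost'[OF assms(1)])
  then have "(\<integral>\<^sup>+s\<in>{a..b}. ennreal (q s) \<partial>lborel) = ennreal (LINT s:{a..b}|lborel. q s)"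
    by (rule set_nn_integral_eq_set_integral_real) (use assms(2) in auto)
  then show ?thesis
    by (simp add: set_borel_integral_eq_integral(2)[OF q])
qed

lemma set_integral_mult_le_tail_integral:
  fixes q h \<phi> :: "real \<Rightarrow> real"
  assumes q: "continuous_on {0..1} q" and q_nonneg: "\<And>s. s \<in> {0..1} \<Longrightarrow> 0 \<le> q s"
    and h_meas [measurable]: "h \<in> borel_measurable lborel" and h: "set_integrable lborel {0..1} h"
    and \<phi>: "continuous_on {0..1} \<phi>"
    and \<phi>_bound: "\<And>s. s \<in> {0..1} \<Longrightarrow> 0 \<le> \<phi> s \<and> \<phi> s \<le> (LINT t:{0..s}|lborel. \<bar>h t\<bar>)"
  shows "(LINT s:{0..1}|lborel. q s * \<phi> s) \<le> (LINT t:{0..1}|lborel. \<bar>h t\<bar> * integral {t..1} q)"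
proof -
  define Q where "Q s = q (clamp 0 1 s)" for s
  have [measurable]: "Q \<in> borel_measurable borel"
    unfolding Q_def by (intro borel_measurable_continuous_onI continuous_on_compose_clamp_01[OF q])
  have tail: "(\<integral>\<^sup>+s\<in>{t..1}. ennreal (Q s) \<partial>lborel) = ennreal (integral {t..1} q)"
    and tail_nonneg: "0 \<le> integral {t..1} q" if "t \<in> {0..1}" for t
  proof -
    have "(\<integral>\<^sup>+s\<in>{t..1}. ennreal (Q s) \<partial>lborel) = (\<integral>\<^sup>+s\<in>{t..1}. ennreal (q s) \<partial>lborel)"
      using that by (intro set_nn_integral_cong) (auto simp: Q_def)
    also have "\<dots> = ennreal (integral {t..1} q)"
      using that by (intro set_nn_integral_eq_integral_continuous continuous_on_subset[OF q] q_nonneg) auto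
    finally show "(\<integral>\<^sup>+s\<in>{t..1}. ennreal (Q s) \<partial>lborel) = ennreal (integral {t..1} q)" .
    show "0 \<le> integral {t..1} q"
      using that q_nonneg
      by (intro Henstock_Kurzweil_Integration.integral_nonneg integrable_continuous_real
          continuous_on_subset[OF q]) auto
  qed
  have "ennreal (LINT s:{0..1}|lborel. q s * \<phi> s) = (\<integral>\<^sup>+s\<in>{0..1}. ennreal (q s * \<phi> s) \<partial>lborel)"
    using q_nonneg \<phi>_bound
    by (intro set_nn_integral_eq_set_integral_real[symmetric] borel_integrable_atLeastAtMost')
      (auto intro!: continuous_intros q \<phi>)
  also have "\<dots> \<le> (\<integral>\<^sup>+s\<in>{0..1}. ennreal (Q s) * (\<integral>\<^sup>+t\<in>{0..s}. ennreal \<bar>h t\<bar> \<partial>lborel) \<partial>lborel)"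
  proof (intro nn_integral_mono)
    fix s :: real
    show "ennreal (q s * \<phi> s) * indicator {0..1} s
        \<le> ennreal (Q s) * (\<integral>\<^sup>+t\<in>{0..s}. ennreal \<bar>h t\<bar> \<partial>lborel) * indicator {0..1} s"
    proof (cases "s \<in> {0..1}")
      case True
      have "set_integrable lborel {0..s} (\<lambda>t. \<bar>h t\<bar>)"
        using True by (intro set_integrable_abs set_integrable_subset[OF h]) auto
      then have "(\<integral>\<^sup>+t\<in>{0..s}. ennreal \<bar>h t\<bar> \<partial>lborel) = ennreal (LINT t:{0..s}|lborel. \<bar>h t\<bar>)"
        by (rule set_nn_integral_eq_set_integral_real) simp
      with True q_nonneg[OF True] \<phi>_bound[OF True] show ?thesis
        by (simp add: Q_def ennreal_mult'[symmetric] mult_left_mono)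
    qed simp
  qed
  also have "\<dots> = (\<integral>\<^sup>+t\<in>{0..1}. ennreal \<bar>h t\<bar> * (\<integral>\<^sup>+s\<in>{t..1}. ennreal (Q s) \<partial>lborel) \<partial>lborel)"
    by (rule nn_integral_triangle_swap) measurable
  also have "\<dots> = (\<integral>\<^sup>+t\<in>{0..1}. ennreal (\<bar>h t\<bar> * integral {t..1} q) \<partial>lborel)"
    by (intro set_nn_integral_cong) (simp_all add: tail tail_nonneg ennreal_mult')
  also have "\<dots> = ennreal (LINT t:{0..1}|lborel. \<bar>h t\<bar> * integral {t..1} q)"
  proof (rule set_nn_integral_eq_set_integral_real)
    have "continuous_on {0..1} (\<lambda>t. integral {t..1} q)"
      by (intro indefinite_integral_continuous_1' integrable_continuous_real q)
    then have "set_integrable lborel {0..1} (\<lambda>t. integral {t..1} q * \<bar>h t\<bar>)"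
      by (rule set_integrable_continuous_mult[OF _ _ set_integrable_abs[OF h]]) measurable
    then show "set_integrable lborel {0..1} (\<lambda>t. \<bar>h t\<bar> * integral {t..1} q)"
      by (simp only: mult.commute)
  qed (use tail_nonneg in simp)
  finally show ?thesis
    using set_integral_nonneg_real[of "{0..1}" "\<lambda>t. \<bar>h t\<bar> * integral {t..1} q"] tail_nonneg
    by (simp add: ennreal_le_iff)
qed

lemma set_integral_mult_le_half_sum_squares:
  fixes f g :: "'a \<Rightarrow> real"
  assumes "set_integrable M A (\<lambda>x. f x * g x)"
    "set_integrable M A (\<lambda>x. (f x)\<^sup>2)" "set_integrable M A (\<lambda>x. (g x)\<^sup>2)"
  shows "(LINT x:A|M. f x * g x) \<le> ((LINT x:A|M. (f x)\<^sup>2) + (LINT x:A|M. (g x)\<^sup>2)) / 2"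
proof -
  have "(LINT x:A|M. f x * g x) \<le> (LINT x:A|M. ((f x)\<^sup>2 + (g x)\<^sup>2) / 2)"
  proof (rule set_integral_mono[OF assms(1)])
    show "set_integrable M A (\<lambda>x. ((f x)\<^sup>2 + (g x)\<^sup>2) / 2)"
      using assms(2,3) by (intro set_integrable_divide set_integral_add)
    show "f x * g x \<le> ((f x)\<^sup>2 + (g x)\<^sup>2) / 2" for x
      using sum_squares_ge_zero[of "f x - g x" 0] by (simp add: power2_eq_square algebra_simps)
  qed
  also have "\<dots> = ((LINT x:A|M. (f x)\<^sup>2) + (LINT x:A|M. (g x)\<^sup>2)) / 2"
    using assms(2,3) by (simp add: set_integral_add set_integral_divide_zero)
  finally show ?thesis .
qed

lemma set_integral_eq_0_if_square_integral_nonpos: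
  fixes h :: "'a \<Rightarrow> real"
  assumes "set_integrable M A (\<lambda>x. (h x)\<^sup>2)" "(LINT x:A|M. (h x)\<^sup>2) \<le> 0" "B \<subseteq> A"
  shows "(LINT x:B|M. h x) = 0"
proof -
  have "(LINT x:A|M. (h x)\<^sup>2) = 0"
    using assms(2) set_integral_nonneg_real[of A "\<lambda>x. (h x)\<^sup>2" M] by simp
  then have "AE x in M. indicator A x * (h x)\<^sup>2 = 0"
    using assms(1) integral_nonneg_eq_0_iff_AE[of M "\<lambda>x. indicator A x * (h x)\<^sup>2"]
    by (simp add: set_integrable_def set_lebesgue_integral_def)
  then have "AE x in M. indicator B x *\<^sub>R h x = 0"
    by eventually_elim (use assms(3) in \<open>auto simp: indicator_def\<close>)
  then show ?thesis
    unfolding set_lebesgue_integral_def by (rule integral_eq_zero_AE)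
qed

lemma continuous_nonneg_set_integral_eq_0_imp:
  fixes f :: "real \<Rightarrow> real"
  assumes "continuous_on {a..b} f" "\<And>x. x \<in> {a..b} \<Longrightarrow> 0 \<le> f x"
    "(LINT x:{a..b}|lborel. f x) = 0" "a < b" "x \<in> {a..b}"
  shows "f x = 0"
proof -
  have "(f has_integral 0) (cbox a b)"
    using assms(3) set_borel_integral_eq_integral[OF borel_integrable_atLeastAtMost'[OF assms(1)]]
    by (simp add: has_integral_integral integrable_continuous_real[OF assms(1)] flip: assms(3))
  then show ?thesis
    using assms by (intro has_integral_0_cbox_imp_0[of a b f]) auto
qed

lemma integral_exp_tail:
  fixes L y :: real
  assumes "0 < L" "y \<le> 1"
  shows "integral {y..1} (\<lambda>s. exp (L * (1 - s))) = (exp (L * (1 - y)) - 1) / L"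
proof -
  have "((\<lambda>s. - exp (L * (1 - s)) / L) has_vector_derivative exp (L * (1 - x))) (at x within {y..1})"
    for x
    using assms
    by (auto intro!: derivative_eq_intros simp flip: has_real_derivative_iff_has_vector_derivative)
  from fundamental_theorem_of_calculus[OF assms(2) this]
  show ?thesis using assms by (simp add: integral_unique field_simps)
qed

section \<open>Existence of a solution by shooting\<close>

text \<open>\<open>\<integral>\<^sub>y\<^sup>1 (s - y) Q(s) ds = \<integral>\<^sub>y\<^sup>1 \<integral>\<^sub>t\<^sup>1 Q\<close>: the solution of \<open>v'' = Q\<close> with \<open>v(1) = v'(1) = 0\<close>.\<close>
definition tail_double_integral :: "(real \<Rightarrow> real) \<Rightarrow> real \<Rightarrow> real" where
  "tail_double_integral Q y = integral {y..1} (\<lambda>s. (s - y) * Q s)"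

lemma tail_double_integral_split:
  assumes "continuous_on {0..1} Q" "y \<in> {0..1}"
  shows "tail_double_integral Q y = integral {y..1} (\<lambda>s. s * Q s) - y * integral {y..1} Q"
proof -
  have c: "continuous_on {y..1} Q" using assms by (auto intro: continuous_on_subset)
  have "tail_double_integral Q y = integral {y..1} (\<lambda>s. s * Q s - y * Q s)"
    unfolding tail_double_integral_def by (simp add: algebra_simps)
  also have "\<dots> = integral {y..1} (\<lambda>s. s * Q s) - integral {y..1} (\<lambda>s. y * Q s)"
    by (intro integral_diff integrable_continuous_real continuous_intros c)
  finally show ?thesis by simp
qed

lemma has_real_derivative_tail_double_integral:
  assumes "continuous_on {0..1} Q" "y \<in> {0..1}"
  shows "(tail_double_integral Q has_real_derivative - integral {y..1} Q) (at y within {0..1})"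
proof -
  have "continuous_on {0..1} (\<lambda>s. s * Q s)"
    by (intro continuous_intros assms(1))
  from integral_has_real_derivative'[OF this assms(2)] integral_has_real_derivative'[OF assms]
  have "((\<lambda>x. integral {x..1} (\<lambda>s. s * Q s)) has_real_derivative - (y * Q y)) (at y within {0..1})"
    "((\<lambda>x. integral {x..1} Q) has_real_derivative - Q y) (at y within {0..1})"
    by simp_all
  then have "((\<lambda>x. integral {x..1} (\<lambda>s. s * Q s) - x * integral {x..1} Q) has_real_derivative
      - integral {y..1} Q) (at y within {0..1})"
    by (auto intro!: derivative_eq_intros)
  then show ?thesis
    by (rule has_field_derivative_transform_within[where d=1])
      (use assms tail_double_integral_split[OF assms(1)] in auto)
qed

lemma continuous_on_tail_double_integral:
  "continuous_on {0..1} Q \<Longrightarrow> continuous_on {0..1} (tail_double_integral Q)"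
  using has_real_derivative_tail_double_integral
  by (meson DERIV_continuous continuous_on_eq_continuous_within)

lemma tail_double_integral_nonneg:
  assumes "continuous_on {0..1} Q" "\<And>s. s \<in> {0..1} \<Longrightarrow> 0 \<le> Q s" "y \<in> {0..1}"
  shows "0 \<le> tail_double_integral Q y"
  unfolding tail_double_integral_def
proof (rule Henstock_Kurzweil_Integration.integral_nonneg)
  have "continuous_on {y..1} Q" using assms by (auto intro: continuous_on_subset)
  then show "(\<lambda>s. (s - y) * Q s) integrable_on {y..1}"
    by (intro integrable_continuous_real continuous_intros)
qed (use assms in auto)

lemma tail_double_integral_le_at_0:
  assumes "continuous_on {0..1} Q" "\<And>s. s \<in> {0..1} \<Longrightarrow> 0 \<le> Q s" "y \<in> {0..1}"
  shows "tail_double_integral Q y \<le> tail_double_integral Q 0"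
proof -
  have c: "continuous_on {y..1} Q" using assms by (auto intro: continuous_on_subset)
  have c0: "continuous_on {0..1} (\<lambda>s. s * Q s)"
    by (intro continuous_intros assms(1))
  have "tail_double_integral Q y \<le> integral {y..1} (\<lambda>s. s * Q s)"
    unfolding tail_double_integral_def
  proof (rule integral_le)
    show "(\<lambda>s. (s - y) * Q s) integrable_on {y..1}" "(\<lambda>s. s * Q s) integrable_on {y..1}"
      by (intro integrable_continuous_real continuous_intros c)+
  qed (use assms in \<open>auto intro: mult_right_mono\<close>)
  also have "\<dots> \<le> integral {0..1} (\<lambda>s. s * Q s)"
  proof (rule integral_subset_le)
    show "(\<lambda>s. s * Q s) integrable_on {y..1}"
      by (rule integrable_continuous_real[OF continuous_on_subset[OF c0]]) (use assms in auto)
  qed (use assms c0 integrable_continuous_real in auto)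
  finally show ?thesis by (simp add: tail_double_integral_def)
qed

lemma abs_tail_double_integral_diff_le:
  assumes Q1: "continuous_on {0..1} Q1" and Q2: "continuous_on {0..1} Q2" and y: "y \<in> {0..1}"
    and g: "continuous_on {0..1} g" and bound: "\<And>s. s \<in> {0..1} \<Longrightarrow> \<bar>Q1 s - Q2 s\<bar> \<le> g s"
  shows "\<bar>tail_double_integral Q1 y - tail_double_integral Q2 y\<bar> \<le> integral {y..1} g"
proof -
  have c: "continuous_on {y..1} Q1" "continuous_on {y..1} Q2" "continuous_on {y..1} g"
    using Q1 Q2 g y by (auto intro: continuous_on_subset)
  have "tail_double_integral Q1 y - tail_double_integral Q2 y
      = integral {y..1} (\<lambda>s. (s - y) * Q1 s - (s - y) * Q2 s)"
    unfolding tail_double_integral_def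
    by (rule integral_diff[symmetric]; intro integrable_continuous_real continuous_intros c)
  also have "norm \<dots> \<le> integral {y..1} g"
  proof (rule integral_norm_bound_integral)
    fix s assume s: "s \<in> {y..1}"
    have "\<bar>(s - y) * Q1 s - (s - y) * Q2 s\<bar> = (s - y) * \<bar>Q1 s - Q2 s\<bar>"
      using s by (simp add: abs_mult flip: right_diff_distrib)
    also have "\<dots> \<le> 1 * g s"
      using s y bound[of s] by (intro mult_mono) auto
    finally show "norm ((s - y) * Q1 s - (s - y) * Q2 s) \<le> g s" by simp
  qed (intro integrable_continuous_real continuous_intros c)+
  finally show ?thesis by simp
qed

lemma abs_cos_diff_le: "\<bar>cos w - cos z\<bar> \<le> \<bar>w - z\<bar>" for w z :: real
proof -
  have "\<bar>cos w - cos z\<bar> = 2 * \<bar>sin ((w + z) / 2)\<bar> * \<bar>sin ((z - w) / 2)\<bar>"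
    by (simp add: cos_diff_cos abs_mult)
  also have "\<dots> \<le> 2 * 1 * \<bar>(z - w) / 2\<bar>"
    by (intro mult_mono abs_sin_x_le_abs_x) auto
  finally show ?thesis by simp
qed

text \<open>Freezing \<open>cos\<close> outside \<open>[-\<pi>/2, 0]\<close> makes the right-hand side of the equation globally
  Lipschitz and nonnegative; the solution constructed stays in \<open>[-\<pi>/2, 0]\<close>, where this is invisible.\<close>
definition cos_trunc :: "real \<Rightarrow> real" where
  "cos_trunc y = cos (max (-pi/2) (min 0 y))"

lemma abs_cos_trunc_diff_le: "\<bar>cos_trunc y - cos_trunc z\<bar> \<le> \<bar>y - z\<bar>"
  unfolding cos_trunc_def by (rule order_trans[OF abs_cos_diff_le]) auto

lemma cos_trunc_nonneg: "0 \<le> cos_trunc y"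
  unfolding cos_trunc_def by (rule cos_ge_zero) (auto simp: max_def min_def)

lemma cos_trunc_eq_cos: "-pi/2 \<le> y \<Longrightarrow> y \<le> 0 \<Longrightarrow> cos_trunc y = cos y"
  by (simp add: cos_trunc_def)

lemma continuous_on_cos_trunc_comp:
  assumes "continuous_on S u"
  shows "continuous_on S (\<lambda>x. cos_trunc (u x))"
proof -
  have "continuous_on UNIV cos_trunc"
    unfolding cos_trunc_def by (intro continuous_intros)
  then show ?thesis by (rule continuous_on_compose2[OF _ assms]) auto
qed

locale shooting =
  fixes P :: "real \<Rightarrow> real" and M :: real
  assumes P_cont: "continuous_on {0..1} P"
    and P_nonneg: "\<And>x. x \<in> {0..1} \<Longrightarrow> 0 \<le> P x"
    and P_le: "\<And>x. x \<in> {0..1} \<Longrightarrow> P x \<le> M"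
begin

text \<open>\<open>shot a u\<close> solves \<open>w'' = P cos_trunc u\<close>, \<open>w(1) = a\<close>, \<open>w'(1) = 0\<close>; shooting from \<open>x = 1\<close> means
  finding a fixed point of \<open>shot a\<close> and then adjusting \<open>a\<close> until \<open>w(0) = 0\<close>.
  Since \<open>shot a\<close> is a Volterra map, the Bielecki-type weight \<open>exp (-(2M+1)(1 - x))\<close> turns it into a
  contraction of constant \<open>M / (2M+1) < 1/2\<close>. Everything is extended to \<open>\<real>\<close> by clamping to
  \<open>[0, 1]\<close>, so that the fixed point can be taken in the complete space \<open>real \<Rightarrow>\<^sub>C real\<close>.\<close>

definition forcing :: "(real \<Rightarrow> real) \<Rightarrow> real \<Rightarrow> real" where
  "forcing u s = P s * cos_trunc (u s)"

definition shot :: "real \<Rightarrow> (real \<Rightarrow> real) \<Rightarrow> real \<Rightarrow> real" where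
  "shot a u x = a + tail_double_integral (forcing u) (clamp 0 1 x)"

definition weight :: "real \<Rightarrow> real" where
  "weight x = exp (- (2 * M + 1) * (1 - clamp 0 1 x))"

definition weighted_shot :: "real \<Rightarrow> (real \<Rightarrow> real) \<Rightarrow> real \<Rightarrow> real" where
  "weighted_shot a v x = weight x * shot a (\<lambda>s. v s / weight s) x"

definition shooting_map :: "real \<Rightarrow> (real \<Rightarrow>\<^sub>C real) \<Rightarrow> (real \<Rightarrow>\<^sub>C real)" where
  "shooting_map a v = Bcontfun (weighted_shot a (apply_bcontfun v))"

lemma M_nonneg: "0 \<le> M"
  using P_nonneg[of 0] P_le[of 0] by auto

lemma weight_pos: "0 < weight x"
  by (simp add: weight_def)

lemma weight_nonzero [simp]: "weight x \<noteq> 0"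
  using weight_pos[of x] by simp

lemma weight_le_1: "weight x \<le> 1"
  using M_nonneg clamp_01_in[of x] by (auto simp: weight_def intro!: mult_nonpos_nonneg)

lemma continuous_on_weight: "continuous_on S weight"
proof -
  have "continuous_on UNIV (\<lambda>x. exp (- (2 * M + 1) * (1 - clamp 0 1 x)))"
    by (rule continuous_on_compose_clamp_01) (intro continuous_intros)
  then show ?thesis
    unfolding weight_def by (rule continuous_on_subset) simp
qed

lemma continuous_on_forcing: "continuous_on {0..1} u \<Longrightarrow> continuous_on {0..1} (forcing u)"
  unfolding forcing_def by (intro continuous_intros P_cont continuous_on_cos_trunc_comp)

lemma forcing_nonneg: "s \<in> {0..1} \<Longrightarrow> 0 \<le> forcing u s"
  unfolding forcing_def using P_nonneg cos_trunc_nonneg by simp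

lemma weighted_shot_in_bcontfun: "weighted_shot a (apply_bcontfun v) \<in> bcontfun"
proof -
  let ?u = "\<lambda>s. apply_bcontfun v s / weight s"
  have u: "continuous_on {0..1} ?u"
    by (intro continuous_intros continuous_on_weight) auto
  have tdi: "continuous_on {0..1} (\<lambda>y. a + tail_double_integral (forcing ?u) y)"
    by (intro continuous_intros continuous_on_tail_double_integral[OF continuous_on_forcing[OF u]])
  obtain B where B: "\<And>y. y \<in> {0..1} \<Longrightarrow> norm (a + tail_double_integral (forcing ?u) y) \<le> B"
    using continuous_on_compact_bound[OF compact_Icc tdi] by blast
  show ?thesis
  proof (rule bcontfun_normI)
    show "continuous_on UNIV (weighted_shot a (apply_bcontfun v))"
      unfolding weighted_shot_def shot_def
      by (intro continuous_intros continuous_on_weight continuous_on_compose_clamp_01[OF tdi])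
    fix x
    have "norm (weighted_shot a (apply_bcontfun v) x) \<le> 1 * B"
      unfolding weighted_shot_def shot_def norm_mult
      using B[OF clamp_01_in] weight_le_1[of x] weight_pos[of x]
      by (intro mult_mono) auto
    then show "norm (weighted_shot a (apply_bcontfun v) x) \<le> B" by simp
  qed
qed

lemma shooting_map_apply: "apply_bcontfun (shooting_map a v) x = weighted_shot a (apply_bcontfun v) x"
  unfolding shooting_map_def using weighted_shot_in_bcontfun by (simp add: Bcontfun_inverse)

lemma abs_forcing_weighted_diff_le:
  fixes v1 v2 :: "real \<Rightarrow>\<^sub>C real"
  assumes s: "s \<in> {0..1}"
  shows "\<bar>forcing (\<lambda>s. apply_bcontfun v1 s / weight s) s - forcing (\<lambda>s. apply_bcontfun v2 s / weight s) s\<bar>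
    \<le> M * dist v1 v2 * exp ((2 * M + 1) * (1 - s))"
proof -
  let ?u1 = "\<lambda>s. apply_bcontfun v1 s / weight s" and ?u2 = "\<lambda>s. apply_bcontfun v2 s / weight s"
  have "\<bar>forcing ?u1 s - forcing ?u2 s\<bar> = P s * \<bar>cos_trunc (?u1 s) - cos_trunc (?u2 s)\<bar>"
    using P_nonneg[OF s] by (simp add: forcing_def abs_mult flip: right_diff_distrib)
  also have "\<dots> \<le> M * \<bar>?u1 s - ?u2 s\<bar>"
    using P_nonneg[OF s] P_le[OF s] abs_cos_trunc_diff_le by (intro mult_mono) auto
  also have "\<bar>?u1 s - ?u2 s\<bar> = dist (apply_bcontfun v1 s) (apply_bcontfun v2 s) / weight s"
    using weight_pos[of s] by (simp add: dist_real_def abs_div flip: diff_divide_distrib)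
  also have "\<dots> \<le> dist v1 v2 / weight s"
    using weight_pos[of s] by (intro divide_right_mono dist_bounded) auto
  also have "dist v1 v2 / weight s = dist v1 v2 * exp ((2 * M + 1) * (1 - s))"
    using s by (simp add: weight_def exp_minus field_simps flip: exp_add)
  finally show ?thesis using M_nonneg by (simp add: mult_left_mono mult.assoc)
qed

lemma dist_shooting_map_le: "dist (shooting_map a v1) (shooting_map a v2) \<le> 1/2 * dist v1 v2"
proof (rule dist_bound)
  fix x :: real
  let ?D = "dist v1 v2" and ?L = "2 * M + 1"
  let ?u1 = "\<lambda>s. apply_bcontfun v1 s / weight s" and ?u2 = "\<lambda>s. apply_bcontfun v2 s / weight s"
  define y where "y = clamp 0 1 x"
  have y: "y \<in> {0..1}" using clamp_01_in y_def by auto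
  have L: "0 < ?L" using M_nonneg by simp
  have cont: "continuous_on {0..1} ?u1" "continuous_on {0..1} ?u2"
    by (intro continuous_intros continuous_on_weight; simp)+
  have "\<bar>tail_double_integral (forcing ?u1) y - tail_double_integral (forcing ?u2) y\<bar>
      \<le> integral {y..1} (\<lambda>s. M * ?D * exp (?L * (1 - s)))"
    by (rule abs_tail_double_integral_diff_le[OF continuous_on_forcing[OF cont(1)]
          continuous_on_forcing[OF cont(2)] y _ abs_forcing_weighted_diff_le]) (intro continuous_intros)
  also have "\<dots> = M * ?D * ((exp (?L * (1 - y)) - 1) / ?L)"
    using integral_exp_tail[OF L, of y] y by simp
  also have "\<dots> \<le> M * ?D * (exp (?L * (1 - y)) / ?L)"
    using M_nonneg L by (intro mult_left_mono divide_right_mono) auto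
  finally have tdi: "\<bar>tail_double_integral (forcing ?u1) y - tail_double_integral (forcing ?u2) y\<bar>
      \<le> M * ?D * (exp (?L * (1 - y)) / ?L)" .
  have "dist (shooting_map a v1 x) (shooting_map a v2 x)
      = weight x * \<bar>tail_double_integral (forcing ?u1) y - tail_double_integral (forcing ?u2) y\<bar>"
    using weight_pos[of x]
    by (simp add: shooting_map_apply weighted_shot_def shot_def y_def dist_real_def abs_mult
        flip: right_diff_distrib)
  also have "\<dots> \<le> weight x * (M * ?D * (exp (?L * (1 - y)) / ?L))"
    using weight_pos[of x] tdi by (intro mult_left_mono) auto
  also have "\<dots> = M / ?L * ?D"
    by (simp add: weight_def flip: y_def) (simp add: exp_minus field_simps flip: exp_add)
  also have "\<dots> \<le> 1/2 * ?D"
    using M_nonneg by (intro mult_right_mono) (auto simp: field_simps)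
  finally show "dist (shooting_map a v1 x) (shooting_map a v2 x) \<le> 1/2 * ?D" .
qed

lemma dist_shooting_map_param_le: "dist (shooting_map a v) (shooting_map b v) \<le> \<bar>a - b\<bar>"
proof (rule dist_bound)
  fix x :: real
  have "dist (shooting_map a v x) (shooting_map b v x) = weight x * \<bar>a - b\<bar>"
    using weight_pos[of x]
    by (simp add: shooting_map_apply weighted_shot_def shot_def dist_real_def abs_mult
        flip: right_diff_distrib)
  also have "\<dots> \<le> \<bar>a - b\<bar>"
    by (rule mult_left_le_one_le) (use weight_pos[of x] weight_le_1[of x] in auto)
  finally show "dist (shooting_map a v x) (shooting_map b v x) \<le> \<bar>a - b\<bar>" .
qed

definition shooting_fix :: "real \<Rightarrow> real \<Rightarrow>\<^sub>C real" where
  "shooting_fix a = (THE v. shooting_map a v = v)"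

lemma shooting_map_ex1_fixpoint: "\<exists>!v. shooting_map a v = v"
  by (rule banach_fix_type[of "1/2"]) (use dist_shooting_map_le in auto)

lemma shooting_map_shooting_fix: "shooting_map a (shooting_fix a) = shooting_fix a"
  unfolding shooting_fix_def by (rule theI'[OF shooting_map_ex1_fixpoint])

lemma shooting_fix_unique: "shooting_map a v = v \<Longrightarrow> shooting_fix a = v"
  using shooting_map_ex1_fixpoint shooting_map_shooting_fix by blast

lemma dist_shooting_fix_le: "dist (shooting_fix a) (shooting_fix b) \<le> 2 * \<bar>a - b\<bar>"
proof -
  have "dist (shooting_fix a) (shooting_fix b)
      = dist (shooting_map a (shooting_fix a)) (shooting_map b (shooting_fix b))"
    by (simp add: shooting_map_shooting_fix)
  also have "\<dots> \<le> dist (shooting_map a (shooting_fix a)) (shooting_map b (shooting_fix a))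
      + dist (shooting_map b (shooting_fix a)) (shooting_map b (shooting_fix b))"
    by (rule dist_triangle)
  also have "\<dots> \<le> \<bar>a - b\<bar> + 1/2 * dist (shooting_fix a) (shooting_fix b)"
    by (intro add_mono dist_shooting_map_param_le dist_shooting_map_le)
  finally show ?thesis by simp
qed

definition shooting_solution :: "real \<Rightarrow> real \<Rightarrow> real" where
  "shooting_solution a x = shooting_fix a x / weight x"

lemma shooting_solution_eq:
  assumes "x \<in> {0..1}"
  shows "shooting_solution a x = a + tail_double_integral (forcing (shooting_solution a)) x"
proof -
  have "shooting_fix a x = shooting_map a (shooting_fix a) x"
    by (simp add: shooting_map_shooting_fix)
  also have "\<dots> = weight x * (a + tail_double_integral (forcing (shooting_solution a)) x)"
    using assms
    by (simp add: shooting_map_apply weighted_shot_def shot_def shooting_solution_def[abs_def])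
  finally show ?thesis by (simp add: shooting_solution_def)
qed

lemma continuous_on_shooting_solution: "continuous_on S (shooting_solution a)"
  unfolding shooting_solution_def by (intro continuous_intros continuous_on_weight) auto

lemma continuous_shooting_solution_at_0: "continuous_on S (\<lambda>a. shooting_solution a 0)"
proof (rule lipschitz_on_continuous_on)
  show "(2 / weight 0)-lipschitz_on S (\<lambda>a. shooting_solution a 0)"
  proof (rule lipschitz_onI)
    fix a b
    have "dist (shooting_solution a 0) (shooting_solution b 0)
        = dist (shooting_fix a 0) (shooting_fix b 0) / weight 0"
      using weight_pos[of 0]
      by (simp add: shooting_solution_def dist_real_def abs_div flip: diff_divide_distrib)
    also have "\<dots> \<le> 2 * \<bar>a - b\<bar> / weight 0"
      using weight_pos[of 0]
      by (intro divide_right_mono order_trans[OF dist_bounded dist_shooting_fix_le]) auto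
    finally show "dist (shooting_solution a 0) (shooting_solution b 0) \<le> 2 / weight 0 * dist a b"
      by (simp add: dist_real_def)
  qed (use weight_pos[of 0] in auto)
qed

lemma continuous_on_forcing_shooting_solution:
  "continuous_on {0..1} (forcing (shooting_solution a))"
  by (rule continuous_on_forcing[OF continuous_on_shooting_solution])

lemma shooting_solution_ge:
  assumes "x \<in> {0..1}"
  shows "a \<le> shooting_solution a x"
proof -
  have "0 \<le> tail_double_integral (forcing (shooting_solution a)) x"
    by (rule tail_double_integral_nonneg[OF continuous_on_forcing_shooting_solution forcing_nonneg assms])
  with shooting_solution_eq[OF assms, of a] show ?thesis by linarith
qed

lemma shooting_solution_le_at_0:
  assumes "x \<in> {0..1}"
  shows "shooting_solution a x \<le> shooting_solution a 0"
proof -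
  have "tail_double_integral (forcing (shooting_solution a)) x
      \<le> tail_double_integral (forcing (shooting_solution a)) 0"
    by (rule tail_double_integral_le_at_0[OF continuous_on_forcing_shooting_solution forcing_nonneg assms])
  moreover have "shooting_solution a 0 = a + tail_double_integral (forcing (shooting_solution a)) 0"
    by (rule shooting_solution_eq) simp
  ultimately show ?thesis using shooting_solution_eq[OF assms, of a] by linarith
qed

text \<open>From \<open>w(1) = -\<pi>/2\<close> the solution stays at the constant \<open>-\<pi>/2\<close>, where \<open>cos\<close> vanishes.\<close>
lemma shooting_solution_neg_half_pi: "shooting_solution (-pi/2) 0 = -pi/2"
proof -
  define v0 where "v0 = (\<lambda>x. weight x * (-pi/2))"
  have "v0 \<in> bcontfun"
  proof (rule bcontfun_normI)
    show "continuous_on UNIV v0" unfolding v0_def by (intro continuous_intros continuous_on_weight)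
    show "norm (v0 x) \<le> pi/2" for x
      using weight_le_1[of x] weight_pos[of x] by (simp add: v0_def abs_mult)
  qed
  then have v0: "apply_bcontfun (Bcontfun v0) = v0" by (simp add: Bcontfun_inverse)
  have forcing_v0: "forcing (\<lambda>s. v0 s / weight s) = (\<lambda>s. 0)"
    by (simp add: fun_eq_iff forcing_def v0_def cos_trunc_def)
  have "shooting_map (-pi/2) (Bcontfun v0) = Bcontfun v0"
    by (intro bcontfun_eqI) (simp add: shooting_map_apply v0 weighted_shot_def shot_def forcing_v0
        tail_double_integral_def, simp add: v0_def)
  then have "shooting_fix (-pi/2) = Bcontfun v0" by (rule shooting_fix_unique)
  then show ?thesis by (simp add: shooting_solution_def v0) (simp add: v0_def)
qed

lemma exists_solution:
  obtains u u1 u2 where "C2_cl01 u u1 u2" "\<And>x. x \<in> {0..1} \<Longrightarrow> u2 x = P x * cos (u x)"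
    "u 0 = 0" "u1 1 = 0" "\<And>x. x \<in> {0..1} \<Longrightarrow> -pi/2 < u x \<and> u x \<le> 0"
proof -
  obtain a where a: "-pi/2 \<le> a" "a \<le> 0" "shooting_solution a 0 = 0"
    using IVT'[of "\<lambda>a. shooting_solution a 0" "-pi/2" 0 0]
      shooting_solution_neg_half_pi shooting_solution_ge continuous_shooting_solution_at_0 by auto
  then have a_gt: "-pi/2 < a"
    using shooting_solution_neg_half_pi by (cases "a = -pi/2") auto
  define u where "u = shooting_solution a"
  define Q where "Q = forcing u"
  have Q: "continuous_on {0..1} Q"
    unfolding Q_def u_def by (rule continuous_on_forcing_shooting_solution)
  have range: "a \<le> u x \<and> u x \<le> 0" if "x \<in> {0..1}" for x
    using shooting_solution_ge[OF that, of a] shooting_solution_le_at_0[OF that, of a] a(3)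
    by (simp add: u_def)
  define u1 where "u1 x = - integral {x..1} Q" for x
  have "(u has_real_derivative u1 x) (at x within {0..1})" if x: "x \<in> {0..1}" for x
  proof -
    have deriv: "((\<lambda>y. a + tail_double_integral Q y) has_real_derivative u1 x) (at x within {0..1})"
      unfolding u1_def
      by (rule DERIV_add[OF DERIV_const has_real_derivative_tail_double_integral[OF Q x], simplified])
    have eq: "a + tail_double_integral Q y = u y" if "y \<in> {0..1}" for y
      unfolding u_def Q_def by (rule shooting_solution_eq[OF that, symmetric])
    show ?thesis
      by (rule has_field_derivative_transform_within[OF deriv, where d=1]) (use x eq in auto)
  qed
  moreover have "(u1 has_real_derivative Q x) (at x within {0..1})" if "x \<in> {0..1}" for x
    unfolding u1_def using DERIV_minus[OF integral_has_real_derivative'[OF Q that]] by simp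
  ultimately have C2: "C2_cl01 u u1 Q"
    using Q by (simp add: C2_cl01_def)
  have ode: "Q x = P x * cos (u x)" if "x \<in> {0..1}" for x
    using range[OF that] a_gt by (simp add: Q_def forcing_def cos_trunc_eq_cos)
  have "u 0 = 0" "u1 1 = 0"
    using a(3) by (simp_all add: u_def u1_def)
  from that[OF C2 ode this] show ?thesis
    using range a_gt by force
qed

end

lemma exists_mixed_bvp_solution:
  fixes P :: "real \<Rightarrow> real"
  assumes "continuous_on {0..1} P" "\<forall>x\<in>{0..1}. 0 \<le> P x"
  obtains u u1 u2 where "C2_cl01 u u1 u2" "\<And>x. x \<in> {0..1} \<Longrightarrow> u2 x = P x * cos (u x)"
    "u 0 = 0" "u1 1 = 0" "\<And>x. x \<in> {0..1} \<Longrightarrow> -pi/2 < u x \<and> u x \<le> 0"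
proof -
  obtain M where "\<And>x. x \<in> {0..1} \<Longrightarrow> norm (P x) \<le> M"
    using continuous_on_compact_bound[OF compact_Icc assms(1)] by blast
  then interpret shooting P M
    using assms by unfold_locales force+
  from exists_solution that show ?thesis by blast
qed

section \<open>Minimality of the solution\<close>

lemma sin_neg_min_abs_le: "sin (- min \<bar>y\<bar> (pi/2)) \<le> sin y"
proof (cases "\<bar>y\<bar> \<le> pi/2")
  case True
  show ?thesis
  proof (cases "0 \<le> y")
    case True
    with \<open>\<bar>y\<bar> \<le> pi/2\<close> have "sin (- y) \<le> 0" "0 \<le> sin y"
      by (auto intro!: sin_ge_zero)
    with True \<open>\<bar>y\<bar> \<le> pi/2\<close> show ?thesis by simp
  qed (use True in simp)
qed simp

lemma sin_gt_tangent:
  fixes a z :: real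
  assumes "-pi/2 \<le> a" "a \<le> 0" "-pi/2 \<le> z" "z \<le> 0" "z \<noteq> a"
  shows "sin a + cos a * (z - a) < sin z"
proof (cases "z < a")
  case True
  obtain \<xi> where \<xi>: "z < \<xi>" "\<xi> < a" "sin a - sin z = (a - z) * cos \<xi>"
    using MVT2[OF True, of sin cos] by (auto intro: DERIV_sin)
  have "cos \<xi> < cos a" using \<xi> assms by (intro cos_monotone_minus_pi_0) auto
  then have "(a - z) * cos \<xi> < (a - z) * cos a" using True by simp
  with \<xi> show ?thesis by (simp add: algebra_simps)
next
  case False
  with assms have lt: "a < z" by simp
  obtain \<xi> where \<xi>: "a < \<xi>" "\<xi> < z" "sin z - sin a = (z - a) * cos \<xi>"
    using MVT2[OF lt, of sin cos] by (auto intro: DERIV_sin)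
  have "cos a < cos \<xi>" using \<xi> assms by (intro cos_monotone_minus_pi_0) auto
  then have "(z - a) * cos a < (z - a) * cos \<xi>" using lt by simp
  with \<xi> show ?thesis by (simp add: algebra_simps)
qed

lemma sin_ge_tangent:
  fixes a z :: real
  assumes "-pi/2 \<le> a" "a \<le> 0" "-pi/2 \<le> z" "z \<le> 0"
  shows "sin a + cos a * (z - a) \<le> sin z"
  using sin_gt_tangent[OF assms] by (cases "z = a") auto

text \<open>Folding \<open>y\<close> to \<open>-min \<bar>y\<bar> (\<pi>/2) \<in> [-\<pi>/2, 0]\<close> does not increase \<open>sin y\<close>, and on \<open>[-\<pi>/2, 0]\<close> the
  sine lies above its tangents; the gap is the sum of both defects.\<close>
definition sin_fold_gap :: "real \<Rightarrow> real \<Rightarrow> real" where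
  "sin_fold_gap a y = sin y - sin a - cos a * (- min \<bar>y\<bar> (pi/2) - a)"

lemma sin_fold_gap_nonneg:
  assumes "-pi/2 \<le> a" "a \<le> 0"
  shows "0 \<le> sin_fold_gap a y"
proof -
  have "sin a + cos a * (- min \<bar>y\<bar> (pi/2) - a) \<le> sin (- min \<bar>y\<bar> (pi/2))"
    by (rule sin_ge_tangent) (use assms in auto)
  with sin_neg_min_abs_le[of y] show ?thesis
    by (simp add: sin_fold_gap_def)
qed

lemma sin_fold_gap_eq_0_imp:
  assumes a: "-pi/2 < a" "a \<le> 0" and gap: "sin_fold_gap a y = 0"
  shows "y = a"
proof -
  let ?p = "- min \<bar>y\<bar> (pi/2)"
  have p: "-pi/2 \<le> ?p" "?p \<le> 0" by auto
  have "sin a + cos a * (?p - a) \<le> sin ?p"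
    by (rule sin_ge_tangent) (use a p in auto)
  with sin_neg_min_abs_le[of y] gap have tangent: "sin a + cos a * (?p - a) = sin ?p" "sin y = sin ?p"
    by (simp_all add: sin_fold_gap_def)
  then have "?p = a"
    using a p sin_gt_tangent[of a ?p] by force
  then have abs_y: "\<bar>y\<bar> = - a"
    using a by (auto simp: min_def split: if_splits)
  show ?thesis
  proof (rule ccontr)
    assume "y \<noteq> a"
    with abs_y a have "y = - a" "a < 0" by (auto simp: abs_if split: if_splits)
    then have "sin a < 0" "0 < sin y"
      using a by (auto intro: sin_less_zero sin_gt_zero)
    with tangent \<open>?p = a\<close> show False by simp
  qed
qed

lemma H1_with_deriv_eq_set_integral:
  assumes "H1_with_deriv \<gamma> h" "x \<in> {0..1}"
  shows "\<gamma> x = \<gamma> 0 + (LINT t:{0..x}|lborel. h t)"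
proof -
  from assms have "\<gamma> x = \<gamma> 0 + (LBINT s=0..x. h s)"
    unfolding H1_with_deriv_def by blast
  moreover have "(LBINT s=0..x. h s) = (LINT t:{0..x}|lborel. h t)"
    using assms(2) by (intro LBINT_0_eq_set_integral) simp
  ultimately show ?thesis by simp
qed

lemma H1_with_deriv_continuous:
  assumes "H1_with_deriv \<gamma> h"
  shows "continuous_on {0..1} \<gamma>"
proof -
  have h: "set_integrable lborel {0..1} h" using assms by (simp add: H1_with_deriv_def)
  have "\<gamma> x = \<gamma> 0 + integral {0..x} h" if "x \<in> {0..1}" for x
  proof -
    have "set_integrable lborel {0..x} h"
      by (rule set_integrable_subset[OF h]) (use that in auto)
    then show ?thesis
      using H1_with_deriv_eq_set_integral[OF assms that] by (simp add: set_borel_integral_eq_integral)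
  qed
  moreover have "continuous_on {0..1} (\<lambda>x. \<gamma> 0 + integral {0..x} h)"
    by (intro continuous_intros indefinite_integral_continuous_1 set_borel_integral_eq_integral(1)[OF h])
  ultimately show ?thesis
    using continuous_on_eq by (metis (no_types, lifting))
qed

lemma H1_with_deriv_of_C1:
  assumes deriv: "\<And>x. x \<in> {0..1} \<Longrightarrow> (u has_real_derivative u1 x) (at x within {0..1})"
    and u1: "continuous_on {0..1} u1"
  shows "H1_with_deriv u (\<lambda>x. u1 (clamp 0 1 x))"
  unfolding H1_with_deriv_def
proof (intro conjI ballI)
  let ?g = "\<lambda>x. u1 (clamp 0 1 x)"
  have g: "continuous_on UNIV ?g" by (rule continuous_on_compose_clamp_01[OF u1])
  then show "?g \<in> borel_measurable lborel"
    using borel_measurable_continuous_onI by simp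
  show "set_integrable lborel {0..1} ?g" "set_integrable lborel {0..1} (\<lambda>x. (?g x)\<^sup>2)"
    by (intro borel_integrable_atLeastAtMost' continuous_intros continuous_on_subset[OF g]; simp)+
  fix x :: real assume x: "x \<in> {0..1}"
  have "(u1 has_integral (u x - u 0)) {0..x}"
  proof (rule fundamental_theorem_of_calculus)
    show "(u has_vector_derivative u1 t) (at t within {0..x})" if "t \<in> {0..x}" for t
      using deriv[of t] that x
      by (auto simp: has_real_derivative_iff_has_vector_derivative
          intro: has_vector_derivative_within_subset)
  qed (use x in auto)
  moreover have "(?g has_integral (LBINT s=0..x. ?g s)) {0..x}"
  proof -
    have g_x: "continuous_on {0..x} ?g" by (rule continuous_on_subset[OF g]) simp
    then have "(?g has_integral integral {0..x} ?g) {0..x}"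
      by (intro integrable_integral integrable_continuous_real)
    moreover have "(LBINT s=0..x. ?g s) = integral {0..x} ?g"
      using x g_x
      by (simp add: LBINT_0_eq_set_integral set_borel_integral_eq_integral borel_integrable_atLeastAtMost')
    ultimately show ?thesis by simp
  qed
  moreover have "(?g has_integral (u x - u 0)) {0..x}"
    by (rule has_integral_eq[OF _ calculation(1)]) (use x in auto)
  ultimately have "u x - u 0 = (LBINT s=0..x. ?g s)"
    by (intro has_integral_unique[of ?g]) blast+
  then show "u x = u 0 + (LBINT s=0..x. ?g s)" by simp
qed

definition sine_energy ::
  "real \<Rightarrow> real \<Rightarrow> (real \<Rightarrow> real) \<Rightarrow> (real \<Rightarrow> real) \<Rightarrow> (real \<Rightarrow> real) \<Rightarrow> real" where
  "sine_energy c \<beta> F \<gamma> h =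
     c * (LINT x:{0..1}|lborel. (h x)\<^sup>2) + \<beta> * (LINT x:{0..1}|lborel. F x * sin (\<gamma> x))"

lemma sine_energy_cong:
  "(\<And>x. x \<in> {0..1} \<Longrightarrow> h x = h' x) \<Longrightarrow> sine_energy c \<beta> F \<gamma> h = sine_energy c \<beta> F \<gamma> h'"
  unfolding sine_energy_def by (subst set_lebesgue_integral_cong[where g="\<lambda>x. (h' x)\<^sup>2"]) auto

locale euler_lagrange_solution =
  fixes c \<beta> :: real and F u u1 u2 :: "real \<Rightarrow> real"
  assumes c_pos: "0 < c" and \<beta>_nonneg: "0 \<le> \<beta>"
    and F_cont: "continuous_on {0..1} F" and F_nonneg: "\<And>x. x \<in> {0..1} \<Longrightarrow> 0 \<le> F x"
    and C2: "C2_cl01 u u1 u2"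
    and euler_lagrange: "\<And>x. x \<in> {0..1} \<Longrightarrow> 2 * c * u2 x = \<beta> * F x * cos (u x)"
    and u_0: "u 0 = 0" and u1_1: "u1 1 = 0"
    and u_range: "\<And>x. x \<in> {0..1} \<Longrightarrow> -pi/2 < u x \<and> u x \<le> 0"
begin

lemma u_deriv: "x \<in> {0..1} \<Longrightarrow> (u has_real_derivative u1 x) (at x within {0..1})"
  and u1_deriv: "x \<in> {0..1} \<Longrightarrow> (u1 has_real_derivative u2 x) (at x within {0..1})"
  and u2_cont: "continuous_on {0..1} u2"
  using C2 by (simp_all add: C2_cl01_def)

lemma u_cont: "continuous_on {0..1} u"
  and u1_cont: "continuous_on {0..1} u1"
  using u_deriv u1_deriv by (meson DERIV_continuous continuous_on_eq_continuous_within)+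

lemma u2_nonneg:
  assumes "x \<in> {0..1}"
  shows "0 \<le> u2 x"
proof -
  have "0 \<le> cos (u x)" using u_range[OF assms] by (intro cos_ge_zero) auto
  then have "0 \<le> 2 * c * u2 x"
    using euler_lagrange[OF assms] \<beta>_nonneg F_nonneg[OF assms] by simp
  with c_pos show ?thesis by (simp add: zero_le_mult_iff)
qed

lemma u1_eq_neg_tail_integral:
  assumes x: "x \<in> {0..1}"
  shows "u1 x = - integral {x..1} u2"
proof -
  have "(u2 has_integral (u1 1 - u1 x)) {x..1}"
  proof (rule fundamental_theorem_of_calculus)
    show "(u1 has_vector_derivative u2 t) (at t within {x..1})" if "t \<in> {x..1}" for t
      using u1_deriv[of t] that x
      by (auto simp: has_real_derivative_iff_has_vector_derivative
          intro: has_vector_derivative_within_subset)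
  qed (use x in auto)
  then show ?thesis using u1_1 by (simp add: integral_unique)
qed

lemma set_integral_u2_mult_u: "(LINT x:{0..1}|lborel. u2 x * u x) = - (LINT x:{0..1}|lborel. (u1 x)\<^sup>2)"
proof -
  have "((\<lambda>x. u2 x * u x + (u1 x)\<^sup>2) has_integral (u1 1 * u 1 - u1 0 * u 0)) {0..1}"
  proof (rule fundamental_theorem_of_calculus)
    show "((\<lambda>x. u1 x * u x) has_vector_derivative u2 x * u x + (u1 x)\<^sup>2) (at x within {0..1})"
      if "x \<in> {0..1}" for x
      using DERIV_mult[OF u1_deriv[OF that] u_deriv[OF that]]
      by (simp add: has_real_derivative_iff_has_vector_derivative power2_eq_square algebra_simps)
  qed simp
  then have "integral {0..1} (\<lambda>x. u2 x * u x + (u1 x)\<^sup>2) = 0"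
    using u1_1 u_0 by (simp add: integral_unique)
  moreover have "integral {0..1} (\<lambda>x. u2 x * u x + (u1 x)\<^sup>2)
      = (LINT x:{0..1}|lborel. u2 x * u x) + (LINT x:{0..1}|lborel. (u1 x)\<^sup>2)"
    by (simp add: set_borel_integral_eq_integral(2)[symmetric] set_integral_add
        borel_integrable_atLeastAtMost' continuous_intros u_cont u1_cont u2_cont)
  ultimately show ?thesis by simp
qed

lemma continuous_on_sin_fold_gap:
  "continuous_on {0..1} \<gamma> \<Longrightarrow> continuous_on {0..1} (\<lambda>x. F x * sin_fold_gap (u x) (\<gamma> x))"
  unfolding sin_fold_gap_def by (intro continuous_intros F_cont u_cont)

lemma sine_integral_expansion:
  assumes \<gamma>: "continuous_on {0..1} \<gamma>"
  shows "\<beta> * (LINT x:{0..1}|lborel. F x * sin (\<gamma> x))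
    = \<beta> * (LINT x:{0..1}|lborel. F x * sin (u x)) + \<beta> * (LINT x:{0..1}|lborel. F x * sin_fold_gap (u x) (\<gamma> x))
      - 2 * c * (LINT x:{0..1}|lborel. u2 x * min \<bar>\<gamma> x\<bar> (pi/2)) + 2 * c * (LINT x:{0..1}|lborel. (u1 x)\<^sup>2)"
proof -
  let ?\<phi> = "\<lambda>x. min \<bar>\<gamma> x\<bar> (pi/2)"
  have pointwise: "\<beta> * (F x * sin (\<gamma> x)) = \<beta> * (F x * sin (u x)) + \<beta> * (F x * sin_fold_gap (u x) (\<gamma> x))
      - 2 * c * (u2 x * ?\<phi> x) - 2 * c * (u2 x * u x)" if "x \<in> {0..1}" for x
  proof -
    have "\<beta> * (F x * sin_fold_gap (u x) (\<gamma> x))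
        = \<beta> * (F x * (sin (\<gamma> x) - sin (u x))) + (\<beta> * F x * cos (u x)) * (?\<phi> x + u x)"
      by (simp add: sin_fold_gap_def algebra_simps)
    also have "\<dots> = \<beta> * (F x * (sin (\<gamma> x) - sin (u x))) + 2 * c * u2 x * (?\<phi> x + u x)"
      by (simp only: euler_lagrange[OF that])
    finally show ?thesis by (simp add: algebra_simps)
  qed
  have int: "set_integrable lborel {0..1} (\<lambda>x. F x * sin (u x))"
    "set_integrable lborel {0..1} (\<lambda>x. F x * sin_fold_gap (u x) (\<gamma> x))"
    "set_integrable lborel {0..1} (\<lambda>x. u2 x * ?\<phi> x)"
    "set_integrable lborel {0..1} (\<lambda>x. u2 x * u x)"
    by (intro borel_integrable_atLeastAtMost' continuous_on_sin_fold_gap continuous_intros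
        F_cont u_cont u2_cont \<gamma>)+
  have "\<beta> * (LINT x:{0..1}|lborel. F x * sin (\<gamma> x)) = (LINT x:{0..1}|lborel. \<beta> * (F x * sin (\<gamma> x)))"
    by simp
  also have "\<dots> = (LINT x:{0..1}|lborel. \<beta> * (F x * sin (u x)) + \<beta> * (F x * sin_fold_gap (u x) (\<gamma> x))
      - 2 * c * (u2 x * ?\<phi> x) - 2 * c * (u2 x * u x))"
    by (rule set_lebesgue_integral_cong) (use pointwise in auto)
  also have "\<dots> = \<beta> * (LINT x:{0..1}|lborel. F x * sin (u x))
      + \<beta> * (LINT x:{0..1}|lborel. F x * sin_fold_gap (u x) (\<gamma> x))
      - 2 * c * (LINT x:{0..1}|lborel. u2 x * ?\<phi> x) - 2 * c * (LINT x:{0..1}|lborel. u2 x * u x)"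
    using int by (simp add: set_integral_add set_integral_diff)
  finally show ?thesis
    by (simp add: set_integral_u2_mult_u)
qed

lemma integral_u2_mult_fold_le:
  assumes H1: "H1_with_deriv \<gamma> h" and \<gamma>_0: "\<gamma> 0 = 0"
  shows "2 * (LINT x:{0..1}|lborel. u2 x * min \<bar>\<gamma> x\<bar> (pi/2))
    \<le> (LINT x:{0..1}|lborel. (h x)\<^sup>2) + (LINT x:{0..1}|lborel. (u1 x)\<^sup>2)"
proof -
  have h_meas [measurable]: "h \<in> borel_measurable lborel"
    and h: "set_integrable lborel {0..1} h" and h2: "set_integrable lborel {0..1} (\<lambda>x. (h x)\<^sup>2)"
    using H1 by (simp_all add: H1_with_deriv_def)
  let ?\<phi> = "\<lambda>x. min \<bar>\<gamma> x\<bar> (pi/2)"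
  have \<phi>_bound: "0 \<le> ?\<phi> s \<and> ?\<phi> s \<le> (LINT t:{0..s}|lborel. \<bar>h t\<bar>)" if "s \<in> {0..1}" for s
  proof -
    have "set_integrable lborel {0..s} h" by (rule set_integrable_subset[OF h]) (use that in auto)
    then have "norm (LINT t:{0..s}|lborel. h t) \<le> (LINT t:{0..s}|lborel. norm (h t))"
      by (rule set_integral_norm_bound)
    then show ?thesis
      using H1_with_deriv_eq_set_integral[OF H1 that] \<gamma>_0 by simp
  qed
  have "(LINT x:{0..1}|lborel. u2 x * ?\<phi> x) \<le> (LINT t:{0..1}|lborel. \<bar>h t\<bar> * integral {t..1} u2)"
  proof (rule set_integral_mult_le_tail_integral[OF u2_cont _ h_meas h])
    show "continuous_on {0..1} ?\<phi>" by (intro continuous_intros H1_with_deriv_continuous[OF H1])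
  qed (use u2_nonneg \<phi>_bound in auto)
  also have "\<dots> = (LINT t:{0..1}|lborel. \<bar>h t\<bar> * - u1 t)"
    by (rule set_lebesgue_integral_cong) (auto simp: u1_eq_neg_tail_integral)
  also have "\<dots> \<le> ((LINT t:{0..1}|lborel. \<bar>h t\<bar>\<^sup>2) + (LINT t:{0..1}|lborel. (- u1 t)\<^sup>2)) / 2"
  proof (rule set_integral_mult_le_half_sum_squares)
    have "set_integrable lborel {0..1} (\<lambda>t. - u1 t * \<bar>h t\<bar>)"
      by (rule set_integrable_continuous_mult[OF _ _ set_integrable_abs[OF h]])
        (intro continuous_intros u1_cont, measurable)
    then show "set_integrable lborel {0..1} (\<lambda>t. \<bar>h t\<bar> * - u1 t)"
      by (simp only: mult.commute)
    show "set_integrable lborel {0..1} (\<lambda>t. \<bar>h t\<bar>\<^sup>2)" using h2 by simp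
    show "set_integrable lborel {0..1} (\<lambda>t. (- u1 t)\<^sup>2)"
      by (intro borel_integrable_atLeastAtMost' continuous_intros u1_cont)
  qed
  finally show ?thesis by simp
qed

lemma energy_gap:
  assumes H1: "H1_with_deriv \<gamma> h" and \<gamma>_0: "\<gamma> 0 = 0"
  shows "sine_energy c \<beta> F u u1 + \<beta> * (LINT x:{0..1}|lborel. F x * sin_fold_gap (u x) (\<gamma> x))
    \<le> sine_energy c \<beta> F \<gamma> h"
proof -
  from mult_left_mono[OF integral_u2_mult_fold_le[OF assms] less_imp_le[OF c_pos]]
  have "2 * c * (LINT x:{0..1}|lborel. u2 x * min \<bar>\<gamma> x\<bar> (pi/2))
      \<le> c * (LINT x:{0..1}|lborel. (h x)\<^sup>2) + c * (LINT x:{0..1}|lborel. (u1 x)\<^sup>2)"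
    by (simp add: algebra_simps)
  then show ?thesis
    using sine_integral_expansion[OF H1_with_deriv_continuous[OF H1]] by (simp add: sine_energy_def)
qed

lemma sine_energy_le:
  assumes "H1_with_deriv \<gamma> h" "\<gamma> 0 = 0"
  shows "sine_energy c \<beta> F u u1 \<le> sine_energy c \<beta> F \<gamma> h"
proof -
  have "0 \<le> (LINT x:{0..1}|lborel. F x * sin_fold_gap (u x) (\<gamma> x))"
    using F_nonneg sin_fold_gap_nonneg u_range
    by (intro set_integral_nonneg_real mult_nonneg_nonneg) (auto simp: less_imp_le)
  then have "0 \<le> \<beta> * (LINT x:{0..1}|lborel. F x * sin_fold_gap (u x) (\<gamma> x))"
    using \<beta>_nonneg by simp
  with energy_gap[OF assms] show ?thesis by linarith
qed

lemma u_u1_eq_0_if_beta_eq_0: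
  assumes "\<beta> = 0" "x \<in> {0..1}"
  shows "u x = 0" and "u1 x = 0"
proof -
  have u1_0: "u1 y = 0" if "y \<in> {0..1}" for y
  proof -
    have "integral {y..1} u2 = integral {y..1} (\<lambda>_. 0)"
      using euler_lagrange c_pos that assms(1) by (intro integral_cong) auto
    then show ?thesis using u1_eq_neg_tail_integral[OF that] by simp
  qed
  then show "u1 x = 0" using assms(2) .
  obtain k where "\<forall>y\<in>{0..1}. u y = k"
    using has_field_derivative_zero_constant[of "{0..1}" u] u_deriv u1_0 by force
  then show "u x = 0" using u_0 assms(2) by force
qed

lemma eq_if_sine_energy_le:
  assumes F_pos: "\<And>x. x \<in> {0..<1} \<Longrightarrow> 0 < F x"
    and H1: "H1_with_deriv \<gamma> h" and \<gamma>_0: "\<gamma> 0 = 0"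
    and le: "sine_energy c \<beta> F \<gamma> h \<le> sine_energy c \<beta> F u u1" and x: "x \<in> {0..1}"
  shows "\<gamma> x = u x"
proof (cases "\<beta> = 0")
  case True
  have "(LINT t:{0..1}|lborel. (u1 t)\<^sup>2) = 0"
    by (subst set_lebesgue_integral_cong[where g="\<lambda>_. 0"]) (simp_all add: u_u1_eq_0_if_beta_eq_0(2)[OF True])
  with le True c_pos have "(LINT t:{0..1}|lborel. (h t)\<^sup>2) \<le> 0"
    by (simp add: sine_energy_def mult_le_0_iff)
  then have "(LINT t:{0..x}|lborel. h t) = 0"
    using H1 x by (intro set_integral_eq_0_if_square_integral_nonpos) (auto simp: H1_with_deriv_def)
  then show ?thesis
    using H1_with_deriv_eq_set_integral[OF H1 x] \<gamma>_0 u_u1_eq_0_if_beta_eq_0(1)[OF True x] by simp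
next
  case False
  let ?G = "\<lambda>x. F x * sin_fold_gap (u x) (\<gamma> x)"
  have G_nonneg: "0 \<le> ?G y" if "y \<in> {0..1}" for y
    using F_nonneg[OF that] sin_fold_gap_nonneg u_range[OF that] by simp
  have "\<beta> * (LINT y:{0..1}|lborel. ?G y) \<le> 0"
    using energy_gap[OF H1 \<gamma>_0] le by simp
  with False \<beta>_nonneg set_integral_nonneg_real[of "{0..1}" ?G lborel] G_nonneg
  have G_int: "(LINT y:{0..1}|lborel. ?G y) = 0"
    by (simp add: mult_le_0_iff)
  have G_zero: "?G y = 0" if "y \<in> {0..1}" for y
    by (rule continuous_nonneg_set_integral_eq_0_imp[OF _ G_nonneg G_int _ that])
      (simp_all add: continuous_on_sin_fold_gap H1_with_deriv_continuous[OF H1])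
  have "\<gamma> y - u y = 0" if y: "y \<in> {0..<1}" for y
  proof -
    have "sin_fold_gap (u y) (\<gamma> y) = 0" using G_zero[of y] F_pos[OF y] y by auto
    with u_range[of y] y show ?thesis using sin_fold_gap_eq_0_imp by force
  qed
  moreover have "continuous_on {0..1} (\<lambda>y. \<gamma> y - u y)"
    by (intro continuous_intros H1_with_deriv_continuous[OF H1] u_cont)
  ultimately have "\<gamma> y - u y = 0" if "y \<in> {0..1}" for y
    using continuous_constant_on_closure[of "{0..<1}" "\<lambda>y. \<gamma> y - u y" 0 y] that by simp
  then show ?thesis using x by simp
qed

lemma is_minimizer:
  assumes energy: "\<And>\<gamma> h. energy \<mu> \<beta> f \<gamma> h = sine_energy c \<beta> F \<gamma> h"
  shows "is_minimizer \<mu> \<beta> f u"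
  unfolding is_minimizer_def
proof (intro conjI exI allI impI)
  let ?g = "\<lambda>x. u1 (clamp 0 1 x)"
  show "u 0 = 0" by (rule u_0)
  show "H1_with_deriv u ?g" by (rule H1_with_deriv_of_C1[OF u_deriv u1_cont])
  fix \<gamma> h assume "\<gamma> 0 = 0 \<and> H1_with_deriv \<gamma> h"
  then have "sine_energy c \<beta> F u u1 \<le> sine_energy c \<beta> F \<gamma> h"
    by (intro sine_energy_le) auto
  moreover have "sine_energy c \<beta> F u ?g = sine_energy c \<beta> F u u1"
    by (rule sine_energy_cong) simp
  ultimately show "energy \<mu> \<beta> f u ?g \<le> energy \<mu> \<beta> f \<gamma> h"
    by (simp only: energy)
qed

lemma is_minimizer_unique:
  assumes energy: "\<And>\<gamma> h. energy \<mu> \<beta> f \<gamma> h = sine_energy c \<beta> F \<gamma> h"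
    and F_pos: "\<And>x. x \<in> {0..<1} \<Longrightarrow> 0 < F x"
    and min: "is_minimizer \<mu> \<beta> f \<gamma>" and x: "x \<in> {0..1}"
  shows "\<gamma> x = u x"
proof -
  obtain h where \<gamma>_0: "\<gamma> 0 = 0" and H1: "H1_with_deriv \<gamma> h"
    and le: "\<And>\<gamma>' h'. \<gamma>' 0 = 0 \<and> H1_with_deriv \<gamma>' h' \<Longrightarrow> energy \<mu> \<beta> f \<gamma> h \<le> energy \<mu> \<beta> f \<gamma>' h'"
    using min unfolding is_minimizer_def by blast
  have "sine_energy c \<beta> F \<gamma> h \<le> sine_energy c \<beta> F u (\<lambda>x. u1 (clamp 0 1 x))"
    using le[of u] u_0 H1_with_deriv_of_C1[OF u_deriv u1_cont] by (simp only: energy)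
  also have "\<dots> = sine_energy c \<beta> F u u1"
    by (rule sine_energy_cong) simp
  finally show ?thesis
    using eq_if_sine_energy_le[OF F_pos H1 \<gamma>_0] x by blast
qed

end

lemma exists_euler_lagrange_solution:
  assumes "0 < c" "0 \<le> \<beta>" "continuous_on {0..1} F" "\<forall>x\<in>{0..1}. 0 \<le> F x"
  obtains u u1 u2 where "euler_lagrange_solution c \<beta> F u u1 u2"
proof -
  have "continuous_on {0..1} (\<lambda>x. \<beta> / (2 * c) * F x)"
    by (intro continuous_intros assms(3))
  moreover have "\<forall>x\<in>{0..1}. 0 \<le> \<beta> / (2 * c) * F x"
    using assms by simp
  ultimately show ?thesis
  proof (rule exists_mixed_bvp_solution)
    fix u u1 u2
    assume "C2_cl01 u u1 u2" "\<And>x. x \<in> {0..1} \<Longrightarrow> u2 x = \<beta> / (2 * c) * F x * cos (u x)"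
      "u 0 = 0" "u1 1 = 0" "\<And>x. x \<in> {0..1} \<Longrightarrow> -pi/2 < u x \<and> u x \<le> 0"
    with assms have "euler_lagrange_solution c \<beta> F u u1 u2"
      by unfold_locales auto
    then show ?thesis by (rule that)
  qed
qed

lemma smooth_on_cl01_imp_continuous: "smooth_on_cl01 f \<Longrightarrow> continuous_on {0..1} f"
  unfolding smooth_on_cl01_def by (metis continuous_on_eq)

lemma tail_integral_pos:
  fixes f :: "real \<Rightarrow> real"
  assumes f: "continuous_on {0..1} f" and f_pos: "\<And>x. x \<in> {0<..<1} \<Longrightarrow> 0 < f x"
    and x: "x \<in> {0..<1}"
  shows "0 < integral {x..1} f"
proof -
  have f_nonneg: "0 \<le> f y" if "y \<in> {0..1}" for y
    by (rule continuous_ge_on_closure[of "{0<..<1}"]) (use f that f_pos in \<open>auto simp: less_imp_le\<close>)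
  have f_x: "continuous_on {x..1} f" using x by (intro continuous_on_subset[OF f]) auto
  have "0 \<le> integral {x..1} f"
    using x f_nonneg by (intro Henstock_Kurzweil_Integration.integral_nonneg integrable_continuous_real f_x) auto
  moreover have "integral {x..1} f \<noteq> 0"
  proof
    assume "integral {x..1} f = 0"
    then have "(f has_integral 0) (cbox x 1)"
      using integrable_integral[OF integrable_continuous_real[OF f_x]] by simp
    then have "f ((x + 1) / 2) = 0"
      using x f_nonneg by (intro has_integral_0_cbox_imp_0[of x 1 f]) (auto intro: f_x)
    with f_pos[of "(x + 1) / 2"] x show False by auto
  qed
  ultimately show ?thesis by simp
qed

lemma Fprim_eq_integral:
  assumes "continuous_on {0..1} f" "x \<in> {0..1}"
  shows "Fprim f x = integral {x..1} f"
proof -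
  have "set_integrable lborel {x..1} f"
    using assms by (intro borel_integrable_atLeastAtMost' continuous_on_subset[OF assms(1)]) auto
  then show ?thesis
    using assms(2) by (simp add: Fprim_def LBINT_1_eq_set_integral set_borel_integral_eq_integral)
qed

lemma energy_eq_sine_energy:
  assumes "continuous_on {0..1} f"
  shows "energy \<mu> \<beta> f \<gamma> h = sine_energy (\<mu> / (4 * pi)) \<beta> (\<lambda>x. integral {x..1} f) \<gamma> h"
proof -
  have "(LINT x:{0..1}|lborel. Fprim f x * sin (\<gamma> x)) = (LINT x:{0..1}|lborel. integral {x..1} f * sin (\<gamma> x))"
    using assms by (intro set_lebesgue_integral_cong) (auto simp: Fprim_eq_integral)
  then show ?thesis
    by (simp add: energy_def sine_energy_def LBINT_01_eq_set_integral)
qed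

theorem mainTheorem12:
  fixes \<mu> \<beta> :: real and f :: "real \<Rightarrow> real"
  assumes "\<mu> > 0" and "\<beta> \<ge> 0" and "smooth_on_cl01 f"
    and "\<forall>x\<in>{0<..<1}. f x > 0"
  shows "\<exists>\<alpha>. is_minimizer \<mu> \<beta> f \<alpha> \<and>
           (\<forall>\<gamma>. is_minimizer \<mu> \<beta> f \<gamma> \<longrightarrow> (\<forall>x\<in>{0..1}. \<gamma> x = \<alpha> x)) \<and>
           (\<forall>x\<in>{0..1}. - pi / 2 \<le> \<alpha> x \<and> \<alpha> x \<le> 0) \<and>
           (\<exists>a1 a2. C2_cl01 \<alpha> a1 a2 \<and>
              (\<forall>x\<in>{0<..<1}. - \<mu> / (2 * pi) * a2 x + \<beta> * Fprim f x * cos (\<alpha> x) = 0) \<and>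
              \<alpha> 0 = 0 \<and> a1 1 = 0)"
proof -
  have f: "continuous_on {0..1} f" by (rule smooth_on_cl01_imp_continuous[OF assms(3)])
  define F where "F x = integral {x..1} f" for x
  have F_pos: "0 < F x" if "x \<in> {0..<1}" for x
    unfolding F_def using tail_integral_pos[OF f _ that] assms(4) by blast
  have F_nonneg: "\<forall>x\<in>{0..1}. 0 \<le> F x"
    using F_pos by (auto simp: F_def le_less)
  have F_cont: "continuous_on {0..1} F"
    unfolding F_def[abs_def] by (intro indefinite_integral_continuous_1' integrable_continuous_real f)
  have c: "0 < \<mu> / (4 * pi)" using assms(1) by simp
  obtain u u1 u2 where "euler_lagrange_solution (\<mu> / (4 * pi)) \<beta> F u u1 u2"
    by (rule exists_euler_lagrange_solution[OF c assms(2) F_cont F_nonneg])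
  then interpret euler_lagrange_solution "\<mu> / (4 * pi)" \<beta> F u u1 u2 .
  have energy: "energy \<mu> \<beta> f \<gamma> h = sine_energy (\<mu> / (4 * pi)) \<beta> F \<gamma> h" for \<gamma> h
    unfolding F_def[abs_def] by (rule energy_eq_sine_energy[OF f])
  have "- \<mu> / (2 * pi) * u2 x + \<beta> * Fprim f x * cos (u x) = 0" if "x \<in> {0<..<1}" for x
    using euler_lagrange[of x] that Fprim_eq_integral[OF f, of x] by (simp add: F_def field_simps)
  then have "\<exists>a1 a2. C2_cl01 u a1 a2 \<and>
      (\<forall>x\<in>{0<..<1}. - \<mu> / (2 * pi) * a2 x + \<beta> * Fprim f x * cos (u x) = 0) \<and> u 0 = 0 \<and> a1 1 = 0"
    using C2 u_0 u1_1 by blast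
  moreover have "\<forall>x\<in>{0..1}. - pi / 2 \<le> u x \<and> u x \<le> 0"
    using u_range by (simp add: less_imp_le)
  moreover have "\<forall>\<gamma>. is_minimizer \<mu> \<beta> f \<gamma> \<longrightarrow> (\<forall>x\<in>{0..1}. \<gamma> x = u x)"
    using is_minimizer_unique[OF energy F_pos] by blast
  ultimately show ?thesis
    using is_minimizer[OF energy] by blast
qed

end
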